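(* If $q\in L_1[0,\pi]$ (with $C_0=0$), then for every positive integer $n$ \[ B_{1,n}(n^2)=-\frac{1}{\pi}\int_0^\pi Q^2(x)\cos 2nx\,dx, \] where $B_{1,n}(n^2)=\sum_{k\in\mathbb{Z},\,k\neq0,-2n}\frac{C_kC_{k+2n}}{n^2-(n+k)^2}$ and $Q(x)=\int_0^x q(t)\,dt$.
   Context: $q$ is a complex-valued summable function on $[0,\pi]$; $C_k=\frac{1}{\pi}\int_0^\pi q(x)\cos kx\,dx$ for $k\in\mathbb{Z}$, and it is assumed that $C_0=0$. *)

theory Defs
  imports "HOL-Analysis.Analysis"
begin

definition cos_coeff :: "(real \<Rightarrow> complex) \<Rightarrow> int \<Rightarrow> complex" where
  "cos_coeff q k = (1 / pi) * (LINT x:{0..pi}|lborel. q x * complex_of_real (cos (real_of_int k * x)))"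

definition prim :: "(real \<Rightarrow> complex) \<Rightarrow> real \<Rightarrow> complex" where
  "prim q x = (LINT t:{0..x}|lborel. q t)"

end

(* Both sides of the identity are restrictions to the diagonal of bilinear forms in (q, r) that
   are bounded for the L1 norm on [0, pi]: |C_k| <= |q|_1 / pi and |Q(x)| <= |q|_1, while the
   weights 1 / |n^2 - (n + k)^2| are summable over k <> 0, -2n.  So their difference is a bounded
   bilinear form, and it suffices to check that it vanishes on a dense set of functions.

   For q = cos(m x) and r = cos(l x) with m, l >= 1 only k = m and k = -m contribute, and the term
   for k = tau m with k + 2n = sigma l is -tau sigma / (4 m l).  Since the primitive of cos(m x) is
   sin(m x) / m, the product-to-sum formula for sin(m x) sin(l x) cos(2n x) produces the same four
   numbers on the integral side.

   Cosine polynomials without constant term are L1-dense among functions with C_0 = 0: truncate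
   and approximate by a continuous function, apply Stone-Weierstrass to the algebra spanned by the
   cos(m x) on [0, pi], and drop the constant term, which is small because C_0 = 0. *)

theory Submission
  imports Defs
begin

definition den :: "nat \<Rightarrow> int \<Rightarrow> real" where
  "den n k = real n ^ 2 - (real n + real_of_int k) ^ 2"

abbreviation B_index :: "nat \<Rightarrow> int set" where
  "B_index n \<equiv> UNIV - {0, - 2 * int n}"

lemma den_eq: "den n k = - real_of_int (k * (k + 2 * int n))"
  unfolding den_def by (simp add: algebra_simps power2_eq_square)

lemma one_plus_square_le_abs_mult_shift:
  fixes N k :: int
  assumes "N \<ge> 0" "k \<noteq> 0" "k \<noteq> - N"
  shows "1 + k ^ 2 \<le> 2 * (N + 1) ^ 2 * \<bar>k * (k + N)\<bar>"
proof -
  define a where "a = \<bar>k * (k + N)\<bar>"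
  have "k * (k + N) \<noteq> 0" using assms by (simp add: add_eq_0_iff2)
  then have a1: "1 \<le> a" unfolding a_def by arith
  have N1: "N + 2 \<le> 2 * (N + 1) ^ 2" using assms(1) by (simp add: power2_eq_square algebra_simps)
  have "k ^ 2 \<le> (N + 1) * a"
  proof -
    consider "k > 0" | "k < - N" | "- N < k" "k < 0" using assms by linarith
    then show ?thesis
    proof cases
      case 1
      then have "k * k \<le> a" unfolding a_def using assms by (simp add: mult_left_mono)
      also have "\<dots> \<le> (N + 1) * a" using a1 assms(1) by simp
      finally show ?thesis by (simp add: power2_eq_square)
    next
      case 2
      have e: "(N + 1) * (- k - N) = N * (- k - N - 1) + - k" by (simp add: algebra_simps)
      have "0 \<le> N * (- k - N - 1)" using 2 assms(1) by simp
      then have "- k \<le> (N + 1) * (- k - N)" using e by linarith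
      then have "(- k) * (- k) \<le> (- k) * ((N + 1) * (- k - N))" using 2 assms(1) by (intro mult_left_mono) auto
      moreover have "a = (- k) * (- k - N)" unfolding a_def using 2 assms(1) by (simp add: abs_mult abs_of_neg)
      ultimately show ?thesis by (simp add: power2_eq_square algebra_simps)
    next
      case 3
      have "N + 1 \<le> (N + 1) * (k + N)" using 3 mult_left_mono[of 1 "k + N" "N + 1"] by simp
      then have "- k \<le> (N + 1) * (k + N)" using 3 by linarith
      then have "(- k) * (- k) \<le> (- k) * ((N + 1) * (k + N))" using 3 by (intro mult_left_mono) auto
      moreover have a_eq: "a = (- k) * (k + N)" unfolding a_def using 3 by (simp add: abs_mult abs_of_neg abs_of_pos)
      have "(N + 1) * a = (- k) * ((N + 1) * (k + N))" unfolding a_eq by (simp add: algebra_simps)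
      ultimately show ?thesis by (simp add: power2_eq_square)
    qed
  qed
  then have "1 + k ^ 2 \<le> (N + 2) * a" using a1 by (simp add: algebra_simps)
  also have "\<dots> \<le> 2 * (N + 1) ^ 2 * a" using N1 a1 by (intro mult_right_mono) auto
  finally show ?thesis unfolding a_def .
qed

lemma one_plus_square_le_abs_den:
  assumes "k \<in> B_index n"
  shows "1 + real_of_int k ^ 2 \<le> 2 * (2 * real n + 1) ^ 2 * \<bar>den n k\<bar>"
proof -
  have "real_of_int (1 + k ^ 2) \<le> real_of_int (2 * (2 * int n + 1) ^ 2 * \<bar>k * (k + 2 * int n)\<bar>)"
    using one_plus_square_le_abs_mult_shift[of "2 * int n" k] assms by (intro of_int_le_iff[THEN iffD2]) auto
  then show ?thesis unfolding den_eq by simp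
qed

lemma summable_on_inverse_one_plus_square: "(\<lambda>k::int. 1 / (1 + real_of_int k ^ 2)) summable_on UNIV"
proof -
  have "summable (\<lambda>m::nat. 1 / (1 + real m ^ 2))"
  proof (rule summable_comparison_test'[where N = 1])
    show "summable (\<lambda>m::nat. inverse (real m ^ 2))"
      using inverse_power_summable[of 2] by simp
    show "norm (1 / (1 + real m ^ 2)) \<le> inverse (real m ^ 2)" if "1 \<le> m" for m
      using that by (simp add: inverse_eq_divide frac_le)
  qed
  then have nat: "(\<lambda>m::nat. 1 / (1 + real m ^ 2)) summable_on UNIV"
    by (subst summable_on_UNIV_nonneg_real_iff) auto
  have "k \<in> range int \<union> range (\<lambda>m. - int m)" for k :: int
    by (cases "k \<ge> 0") (auto simp: image_iff intro: exI[of _ "nat \<bar>k\<bar>"])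
  then have "(UNIV::int set) = range int \<union> range (\<lambda>m. - int m)" by blast
  moreover have "(\<lambda>k::int. 1 / (1 + real_of_int k ^ 2)) summable_on range int"
    by (subst summable_on_reindex) (auto simp: o_def nat)
  moreover have "(\<lambda>k::int. 1 / (1 + real_of_int k ^ 2)) summable_on range (\<lambda>m. - int m)"
    by (subst summable_on_reindex) (auto simp: o_def inj_on_def nat)
  ultimately show ?thesis by (metis summable_on_union)
qed

lemma summable_on_inverse_abs_den: "(\<lambda>k. 1 / \<bar>den n k\<bar>) summable_on B_index n"
proof (rule summable_on_comparison_test)
  let ?K = "2 * (2 * real n + 1) ^ 2"
  show "(\<lambda>k. ?K * (1 / (1 + real_of_int k ^ 2))) summable_on B_index n"
    by (intro summable_on_cmult_right summable_on_subset_banach[OF summable_on_inverse_one_plus_square]) auto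
  show "1 / \<bar>den n k\<bar> \<le> ?K * (1 / (1 + real_of_int k ^ 2))" if "k \<in> B_index n" for k
  proof -
    have "0 < 1 + real_of_int k ^ 2" by (simp add: add_pos_nonneg)
    moreover have "1 + real_of_int k ^ 2 \<le> ?K * \<bar>den n k\<bar>" by (rule one_plus_square_le_abs_den[OF that])
    ultimately show ?thesis by (auto simp: divide_simps mult.commute)
  qed
qed simp

section \<open>L1 estimates on [0, pi]\<close>

definition L1_norm :: "(real \<Rightarrow> complex) \<Rightarrow> real" where
  "L1_norm q = (LINT x:{0..pi}|lborel. norm (q x))"

lemma L1_norm_nonneg: "L1_norm q \<ge> 0"
  unfolding L1_norm_def set_lebesgue_integral_def by (rule Bochner_Integration.integral_nonneg) simp

lemma L1_norm_triangle:
  assumes "set_integrable lborel {0..pi} f" "set_integrable lborel {0..pi} g" "set_integrable lborel {0..pi} h"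
  shows "L1_norm (\<lambda>x. f x - h x) \<le> L1_norm (\<lambda>x. f x - g x) + L1_norm (\<lambda>x. g x - h x)"
proof -
  have int: "set_integrable lborel {0..pi} (\<lambda>x. norm (f x - g x))" "set_integrable lborel {0..pi} (\<lambda>x. norm (g x - h x))"
    using assms by (auto intro!: set_integrable_norm)
  have "L1_norm (\<lambda>x. f x - h x) \<le> (LINT x:{0..pi}|lborel. norm (f x - g x) + norm (g x - h x))"
    unfolding L1_norm_def
  proof (rule set_integral_mono)
    show "set_integrable lborel {0..pi} (\<lambda>x. norm (f x - h x))" using assms by (auto intro!: set_integrable_norm)
    show "set_integrable lborel {0..pi} (\<lambda>x. norm (f x - g x) + norm (g x - h x))"
      using int by (rule set_integral_add(1))
    show "norm (f x - h x) \<le> norm (f x - g x) + norm (g x - h x)" for x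
      using norm_triangle_ineq[of "f x - g x" "g x - h x"] by simp
  qed
  also have "\<dots> = L1_norm (\<lambda>x. f x - g x) + L1_norm (\<lambda>x. g x - h x)"
    unfolding L1_norm_def using int by (rule set_integral_add(2))
  finally show ?thesis .
qed

lemma L1_norm_le_add_diff:
  assumes "set_integrable lborel {0..pi} q" "set_integrable lborel {0..pi} p"
  shows "L1_norm p \<le> L1_norm q + L1_norm (\<lambda>x. q x - p x)"
proof -
  have "set_integrable lborel {0..pi} (\<lambda>_. 0 :: complex)" by (simp add: set_integrable_def)
  then show ?thesis using L1_norm_triangle[of "\<lambda>_. 0" q p] assms by (simp add: L1_norm_def)
qed

lemma L1_norm_const: "L1_norm (\<lambda>_. c) = pi * norm c"
  unfolding L1_norm_def by (subst set_integral_const) auto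

lemma L1_norm_le_uniform:
  assumes f: "set_integrable lborel {0..pi} f" and bound: "\<And>x. x \<in> {0..pi} \<Longrightarrow> norm (f x) \<le> b"
  shows "L1_norm f \<le> pi * b"
proof -
  have "L1_norm f \<le> (LINT x:{0..pi}|lborel. b)"
    unfolding L1_norm_def
  proof (rule set_integral_mono)
    show "set_integrable lborel {0..pi} (\<lambda>x. norm (f x))" by (rule set_integrable_norm[OF f])
    show "set_integrable lborel {0..pi} (\<lambda>x. b)" by (rule borel_integrable_atLeastAtMost') simp
  qed (rule bound)
  also have "\<dots> = pi * b" by (subst set_integral_const) auto
  finally show ?thesis .
qed

lemma set_integrable_mult_bounded:
  fixes q g :: "real \<Rightarrow> complex"
  assumes q: "set_integrable lborel A q" and g: "g \<in> borel_measurable borel"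
    and bound: "\<And>x. norm (g x) \<le> B"
  shows "set_integrable lborel A (\<lambda>x. q x * g x)"
proof -
  have F: "integrable lborel (\<lambda>x. indicator A x *\<^sub>R q x)" using q by (simp add: set_integrable_def)
  have [measurable]: "(\<lambda>x. indicator A x *\<^sub>R q x) \<in> borel_measurable lborel"
    using F by (rule borel_measurable_integrable)
  have [measurable]: "g \<in> borel_measurable lborel" using g by simp
  have "integrable lborel (\<lambda>x. (indicator A x *\<^sub>R q x) * g x)"
  proof (rule Bochner_Integration.integrable_bound[OF integrable_mult_right[OF F, of "complex_of_real B"]])
    show "AE x in lborel. norm (indicat_real A x *\<^sub>R q x * g x) \<le> norm (complex_of_real B * (indicat_real A x *\<^sub>R q x))"
    proof (rule AE_I2)
      fix x
      have "0 \<le> B" using bound[of x] norm_ge_zero order_trans by blast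
      have "indicat_real A x * (cmod (g x) * cmod (q x)) \<le> indicat_real A x * (B * cmod (q x))"
        using bound[of x] by (intro mult_left_mono mult_right_mono) auto
      then show "norm (indicat_real A x *\<^sub>R q x * g x) \<le> norm (complex_of_real B * (indicat_real A x *\<^sub>R q x))"
        using \<open>0 \<le> B\<close> by (simp add: norm_mult mult_ac)
    qed
  qed measurable
  then show ?thesis by (simp add: set_integrable_def mult.assoc)
qed

lemma set_integrable_mult_cos:
  fixes q :: "real \<Rightarrow> complex"
  assumes "set_integrable lborel A q"
  shows "set_integrable lborel A (\<lambda>x. q x * complex_of_real (cos (a * x)))"
  by (rule set_integrable_mult_bounded[OF assms, where B = 1]) auto

lemma norm_cos_coeff_le:
  assumes q: "set_integrable lborel {0..pi} q"
  shows "norm (cos_coeff q k) \<le> L1_norm q / pi"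
proof -
  let ?f = "\<lambda>x. q x * complex_of_real (cos (real_of_int k * x))"
  have "norm (LINT x:{0..pi}|lborel. ?f x) \<le> (LINT x:{0..pi}|lborel. norm (?f x))"
    by (rule set_integral_norm_bound[OF set_integrable_mult_cos[OF q]])
  also have "\<dots> \<le> L1_norm q"
    unfolding L1_norm_def
  proof (rule set_integral_mono)
    show "set_integrable lborel {0..pi} (\<lambda>x. norm (?f x))"
      by (rule set_integrable_norm[OF set_integrable_mult_cos[OF q]])
    show "set_integrable lborel {0..pi} (\<lambda>x. norm (q x))" by (rule set_integrable_norm[OF q])
  qed (auto simp: norm_mult mult_left_le)
  finally show ?thesis
    unfolding cos_coeff_def by (simp add: norm_divide divide_right_mono)
qed

lemma cos_coeff_diff:
  assumes "set_integrable lborel {0..pi} q" "set_integrable lborel {0..pi} p"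
  shows "cos_coeff (\<lambda>x. q x - p x) k = cos_coeff q k - cos_coeff p k"
  unfolding cos_coeff_def left_diff_distrib
  using assms by (simp add: set_integral_diff(2) set_integrable_mult_cos right_diff_distrib)

lemma set_integrable_prefix:
  fixes q :: "real \<Rightarrow> 'a::{banach, second_countable_topology}"
  assumes "set_integrable lborel {0..pi} q" "x \<le> pi"
  shows "set_integrable lborel {0..x} q"
  by (rule set_integrable_subset[OF assms(1)]) (use assms(2) in auto)

lemma continuous_on_prim:
  assumes q: "set_integrable lborel {0..pi} q"
  shows "continuous_on {0..pi} (prim q)"
proof -
  have "q integrable_on {0..pi}" using set_borel_integral_eq_integral(1)[OF q] .
  then have "continuous_on {0..pi} (\<lambda>x. integral {0..x} q)" by (rule indefinite_integral_continuous_1)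
  moreover have "integral {0..x} q = prim q x" if "x \<in> {0..pi}" for x
    unfolding prim_def using set_integrable_prefix[OF q] that by (simp add: set_borel_integral_eq_integral)
  ultimately show ?thesis by (rule continuous_on_eq)
qed

lemma norm_prim_le:
  assumes q: "set_integrable lborel {0..pi} q" and x: "x \<le> pi"
  shows "norm (prim q x) \<le> L1_norm q"
proof -
  have "norm (prim q x) \<le> (LINT t:{0..x}|lborel. norm (q t))"
    unfolding prim_def by (rule set_integral_norm_bound[OF set_integrable_prefix[OF q x]])
  also have "\<dots> \<le> L1_norm q"
    unfolding L1_norm_def set_lebesgue_integral_def
    using set_integrable_norm[OF set_integrable_prefix[OF q x]] set_integrable_norm[OF q] x
    by (intro integral_mono) (auto simp: set_integrable_def indicator_def)
  finally show ?thesis .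
qed

lemma prim_diff:
  assumes "set_integrable lborel {0..pi} q" "set_integrable lborel {0..pi} p" "x \<le> pi"
  shows "prim (\<lambda>t. q t - p t) x = prim q x - prim p x"
  unfolding prim_def using set_integrable_prefix[OF assms(1,3)] set_integrable_prefix[OF assms(2,3)]
  by (rule set_integral_diff(2))

section \<open>The series and the integral as bilinear forms\<close>

definition B_term :: "nat \<Rightarrow> (real \<Rightarrow> complex) \<Rightarrow> (real \<Rightarrow> complex) \<Rightarrow> int \<Rightarrow> complex" where
  "B_term n q r k = cos_coeff q k * cos_coeff r (k + 2 * int n) / complex_of_real (den n k)"

definition Q_form :: "nat \<Rightarrow> (real \<Rightarrow> complex) \<Rightarrow> (real \<Rightarrow> complex) \<Rightarrow> complex" where
  "Q_form n q r = - (1 / pi) * (LINT x:{0..pi}|lborel. prim q x * prim r x * complex_of_real (cos (2 * real n * x)))"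

definition B_defect :: "nat \<Rightarrow> (real \<Rightarrow> complex) \<Rightarrow> (real \<Rightarrow> complex) \<Rightarrow> complex" where
  "B_defect n q r = infsum (B_term n q r) (B_index n) - Q_form n q r"

lemma infsum_diff:
  fixes f g :: "'a \<Rightarrow> 'b::{topological_ab_group_add, t2_space}"
  assumes "f summable_on A" "g summable_on A"
  shows "infsum (\<lambda>x. f x - g x) A = infsum f A - infsum g A"
  using infsum_add[OF assms(1) summable_on_uminus[THEN iffD2, OF assms(2)]]
  by (simp add: infsum_uminus)

lemma norm_B_term_le:
  assumes "set_integrable lborel {0..pi} q" "set_integrable lborel {0..pi} r"
  shows "norm (B_term n q r k) \<le> L1_norm q * L1_norm r / pi ^ 2 * (1 / \<bar>den n k\<bar>)"
proof -
  have "norm (B_term n q r k) = norm (cos_coeff q k) * norm (cos_coeff r (k + 2 * int n)) * (1 / \<bar>den n k\<bar>)"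
    by (simp add: B_term_def norm_mult norm_divide)
  also have "\<dots> \<le> (L1_norm q / pi) * (L1_norm r / pi) * (1 / \<bar>den n k\<bar>)"
    using assms by (intro mult_right_mono mult_mono norm_cos_coeff_le) (auto simp: L1_norm_nonneg)
  finally show ?thesis by (simp add: power2_eq_square)
qed

lemma B_term_abs_summable:
  assumes "set_integrable lborel {0..pi} q" "set_integrable lborel {0..pi} r"
  shows "(\<lambda>k. norm (B_term n q r k)) summable_on B_index n"
proof (rule summable_on_comparison_test)
  show "(\<lambda>k. L1_norm q * L1_norm r / pi ^ 2 * (1 / \<bar>den n k\<bar>)) summable_on B_index n"
    by (intro summable_on_cmult_right summable_on_inverse_abs_den)
qed (use norm_B_term_le[OF assms] in auto)

lemma B_term_summable:
  assumes "set_integrable lborel {0..pi} q" "set_integrable lborel {0..pi} r"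
  shows "B_term n q r summable_on B_index n"
  by (rule abs_summable_summable[OF B_term_abs_summable[OF assms]])

lemma norm_infsum_B_term_le:
  assumes "set_integrable lborel {0..pi} q" "set_integrable lborel {0..pi} r"
  shows "norm (infsum (B_term n q r) (B_index n))
       \<le> L1_norm q * L1_norm r / pi ^ 2 * infsum (\<lambda>k. 1 / \<bar>den n k\<bar>) (B_index n)"
proof -
  have "norm (infsum (B_term n q r) (B_index n)) \<le> infsum (\<lambda>k. norm (B_term n q r k)) (B_index n)"
    by (rule norm_infsum_bound[OF B_term_abs_summable[OF assms]])
  also have "\<dots> \<le> infsum (\<lambda>k. L1_norm q * L1_norm r / pi ^ 2 * (1 / \<bar>den n k\<bar>)) (B_index n)"
    by (intro infsum_mono B_term_abs_summable assms summable_on_cmult_right summable_on_inverse_abs_den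
        norm_B_term_le)
  also have "\<dots> = L1_norm q * L1_norm r / pi ^ 2 * infsum (\<lambda>k. 1 / \<bar>den n k\<bar>) (B_index n)"
    by (rule infsum_cmult_right) (rule summable_on_inverse_abs_den)
  finally show ?thesis .
qed

lemma B_term_diff_left:
  assumes "set_integrable lborel {0..pi} q" "set_integrable lborel {0..pi} p"
  shows "B_term n (\<lambda>x. q x - p x) r k = B_term n q r k - B_term n p r k"
  unfolding B_term_def cos_coeff_diff[OF assms] by (simp add: diff_divide_distrib left_diff_distrib)

lemma B_term_diff_right:
  assumes "set_integrable lborel {0..pi} r" "set_integrable lborel {0..pi} p"
  shows "B_term n q (\<lambda>x. r x - p x) k = B_term n q r k - B_term n q p k"
  unfolding B_term_def cos_coeff_diff[OF assms] by (simp add: diff_divide_distrib right_diff_distrib)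

lemma set_integrable_prim_prim_cos:
  assumes "set_integrable lborel {0..pi} q" "set_integrable lborel {0..pi} r"
  shows "set_integrable lborel {0..pi} (\<lambda>x. prim q x * prim r x * complex_of_real (cos (2 * real n * x)))"
  by (intro borel_integrable_atLeastAtMost' continuous_intros continuous_on_prim assms)

lemma norm_Q_form_le:
  assumes q: "set_integrable lborel {0..pi} q" and r: "set_integrable lborel {0..pi} r"
  shows "norm (Q_form n q r) \<le> L1_norm q * L1_norm r"
proof -
  let ?f = "\<lambda>x. prim q x * prim r x * complex_of_real (cos (2 * real n * x))"
  have "norm (LINT x:{0..pi}|lborel. ?f x) \<le> (LINT x:{0..pi}|lborel. norm (?f x))"
    by (rule set_integral_norm_bound[OF set_integrable_prim_prim_cos[OF q r]])
  also have "\<dots> \<le> (LINT x:{0..pi}|lborel. L1_norm q * L1_norm r)"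
  proof (rule set_integral_mono)
    show "set_integrable lborel {0..pi} (\<lambda>x. norm (?f x))"
      by (rule set_integrable_norm[OF set_integrable_prim_prim_cos[OF q r]])
    show "set_integrable lborel {0..pi} (\<lambda>x. L1_norm q * L1_norm r)"
      by (rule borel_integrable_atLeastAtMost') simp
    show "norm (?f x) \<le> L1_norm q * L1_norm r" if "x \<in> {0..pi}" for x
    proof -
      have "norm (?f x) = norm (prim q x) * norm (prim r x) * \<bar>cos (2 * real n * x)\<bar>"
        by (simp add: norm_mult)
      also have "\<dots> \<le> L1_norm q * L1_norm r * 1"
        using that by (intro mult_mono norm_prim_le q r) (auto simp: L1_norm_nonneg)
      finally show ?thesis by simp
    qed
  qed
  also have "\<dots> = pi * (L1_norm q * L1_norm r)"
    by (subst set_integral_const) auto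
  finally show ?thesis
    unfolding Q_form_def by (simp add: norm_mult norm_divide divide_le_eq mult.commute)
qed

lemma Q_form_commute: "Q_form n q r = Q_form n r q"
  unfolding Q_form_def by (simp add: mult.commute)

lemma Q_form_diff_left:
  assumes q: "set_integrable lborel {0..pi} q" and p: "set_integrable lborel {0..pi} p"
    and r: "set_integrable lborel {0..pi} r"
  shows "Q_form n (\<lambda>x. q x - p x) r = Q_form n q r - Q_form n p r"
proof -
  let ?c = "\<lambda>x. complex_of_real (cos (2 * real n * x))"
  have "(LINT x:{0..pi}|lborel. prim (\<lambda>x. q x - p x) x * prim r x * ?c x)
      = (LINT x:{0..pi}|lborel. prim q x * prim r x * ?c x - prim p x * prim r x * ?c x)"
    by (rule set_lebesgue_integral_cong) (auto simp: prim_diff[OF q p] algebra_simps)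
  also have "\<dots> = (LINT x:{0..pi}|lborel. prim q x * prim r x * ?c x)
      - (LINT x:{0..pi}|lborel. prim p x * prim r x * ?c x)"
    by (intro set_integral_diff(2) set_integrable_prim_prim_cos q p r)
  finally have I: "(LINT x:{0..pi}|lborel. prim (\<lambda>x. q x - p x) x * prim r x * ?c x)
      = (LINT x:{0..pi}|lborel. prim q x * prim r x * ?c x) - (LINT x:{0..pi}|lborel. prim p x * prim r x * ?c x)" .
  show ?thesis unfolding Q_form_def I by (simp add: algebra_simps)
qed

lemma B_defect_diff_left:
  assumes q: "set_integrable lborel {0..pi} q" and p: "set_integrable lborel {0..pi} p"
    and r: "set_integrable lborel {0..pi} r"
  shows "B_defect n (\<lambda>x. q x - p x) r = B_defect n q r - B_defect n p r"
  unfolding B_defect_def B_term_diff_left[OF q p] Q_form_diff_left[OF q p r]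
  using infsum_diff[OF B_term_summable[OF q r] B_term_summable[OF p r]] by simp

lemma B_defect_diff_right:
  assumes q: "set_integrable lborel {0..pi} q" and p: "set_integrable lborel {0..pi} p"
    and r: "set_integrable lborel {0..pi} r"
  shows "B_defect n r (\<lambda>x. q x - p x) = B_defect n r q - B_defect n r p"
  unfolding B_defect_def B_term_diff_right[OF q p] Q_form_commute[of n r] Q_form_diff_left[OF q p r]
  using infsum_diff[OF B_term_summable[OF r q] B_term_summable[OF r p]] by simp

lemma B_defect_bounded:
  obtains C where "C \<ge> 0"
    "\<And>(q :: real \<Rightarrow> complex) (r :: real \<Rightarrow> complex). set_integrable lborel {0..pi} q \<Longrightarrow> set_integrable lborel {0..pi} r
       \<Longrightarrow> norm (B_defect n q r) \<le> C * L1_norm q * L1_norm r"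
proof
  let ?W = "infsum (\<lambda>k. 1 / \<bar>den n k\<bar>) (B_index n)"
  show "?W / pi ^ 2 + 1 \<ge> 0" by (simp add: infsum_nonneg add_nonneg_nonneg)
  fix q r :: "real \<Rightarrow> complex"
  assume q: "set_integrable lborel {0..pi} q" and r: "set_integrable lborel {0..pi} r"
  have "norm (B_defect n q r) \<le> norm (infsum (B_term n q r) (B_index n)) + norm (Q_form n q r)"
    unfolding B_defect_def by (rule norm_triangle_ineq4)
  also have "\<dots> \<le> L1_norm q * L1_norm r / pi ^ 2 * ?W + L1_norm q * L1_norm r"
    by (intro add_mono norm_infsum_B_term_le norm_Q_form_le q r)
  also have "\<dots> = (?W / pi ^ 2 + 1) * L1_norm q * L1_norm r" by (simp add: field_simps)
  finally show "norm (B_defect n q r) \<le> (?W / pi ^ 2 + 1) * L1_norm q * L1_norm r" .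
qed

section \<open>Cosine modes\<close>

abbreviation cos_mode :: "nat \<Rightarrow> real \<Rightarrow> complex" where
  "cos_mode m x \<equiv> complex_of_real (cos (real m * x))"

lemma set_integral_sum:
  fixes f :: "'i \<Rightarrow> 'a \<Rightarrow> 'b::{banach, second_countable_topology}"
  assumes "\<And>i. i \<in> I \<Longrightarrow> set_integrable M A (f i)"
  shows "set_integrable M A (\<lambda>x. \<Sum>i\<in>I. f i x)"
    and "(LINT x:A|M. (\<Sum>i\<in>I. f i x)) = (\<Sum>i\<in>I. LINT x:A|M. f i x)"
proof -
  have e: "(\<lambda>x. indicator A x *\<^sub>R (\<Sum>i\<in>I. f i x)) = (\<lambda>x. \<Sum>i\<in>I. indicator A x *\<^sub>R f i x)"
    by (simp only: scaleR_sum_right)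
  have "integrable M (\<lambda>x. indicator A x *\<^sub>R f i x)" if "i \<in> I" for i
    using assms[OF that] by (simp add: set_integrable_def)
  then show "set_integrable M A (\<lambda>x. \<Sum>i\<in>I. f i x)"
    and "(LINT x:A|M. (\<Sum>i\<in>I. f i x)) = (\<Sum>i\<in>I. LINT x:A|M. f i x)"
    unfolding set_integrable_def set_lebesgue_integral_def e by auto
qed

lemma integral_cos_int:
  "(LINT x:{0..pi}|lborel. cos (real_of_int j * x)) = (if j = 0 then pi else 0)"
proof (cases "j = 0")
  case True
  have "(LINT x:{0..pi}|lborel. (1::real)) = pi" by (subst set_integral_const) auto
  then show ?thesis using True by simp
next
  case False
  have "(LINT x:{0..pi}|lborel. cos (real_of_int j * x))
      = sin (real_of_int j * pi) / real_of_int j - sin (real_of_int j * 0) / real_of_int j"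
    unfolding set_lebesgue_integral_def using False
    by (intro integral_FTC_atLeastAtMost)
       (auto intro!: continuous_intros derivative_eq_intros
         simp: has_real_derivative_iff_has_vector_derivative[symmetric])
  then show ?thesis using False by (simp add: mult.commute)
qed

lemma integral_cos_lincomb:
  fixes a :: "'i \<Rightarrow> real" and j :: "'i \<Rightarrow> int"
  shows "(LINT x:{0..pi}|lborel. \<Sum>i\<in>I. a i * cos (real_of_int (j i) * x))
       = pi * (\<Sum>i\<in>I. a i * of_bool (j i = 0))"
proof -
  have "set_integrable lborel {0..pi} (\<lambda>x. a i * cos (real_of_int (j i) * x))" for i
    by (intro borel_integrable_atLeastAtMost' continuous_intros)
  then have "(LINT x:{0..pi}|lborel. \<Sum>i\<in>I. a i * cos (real_of_int (j i) * x))
      = (\<Sum>i\<in>I. a i * (LINT x:{0..pi}|lborel. cos (real_of_int (j i) * x)))"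
    by (simp only: set_integral_sum(2) set_integral_mult_right)
  also have "\<dots> = pi * (\<Sum>i\<in>I. a i * of_bool (j i = 0))"
    unfolding integral_cos_int sum_distrib_left by (intro sum.cong) auto
  finally show ?thesis .
qed

lemma cos_coeff_cos:
  fixes m :: nat
  assumes "m \<ge> 1"
  shows "cos_coeff (cos_mode m) k
       = (of_bool (k = int m) + of_bool (k = - int m)) / 2"
proof -
  have prod: "cos (real m * x) * cos (real_of_int k * x)
      = (\<Sum>\<sigma>\<in>{1, -1}. 1 / 2 * cos (real_of_int (int m - \<sigma> * k) * x))" for x
    by (simp add: cos_add cos_diff algebra_simps)
  have I: "(LINT x:{0..pi}|lborel. cos (real m * x) * cos (real_of_int k * x))
      = pi / 2 * (of_bool (k = int m) + of_bool (k = - int m) :: real)"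
    unfolding prod integral_cos_lincomb using assms by auto
  show ?thesis
    unfolding cos_coeff_def of_real_mult[symmetric] set_integral_complex_of_real I by simp
qed

lemma prim_cos:
  fixes m :: nat
  assumes "m \<ge> 1" "0 \<le> x"
  shows "prim (cos_mode m) x = complex_of_real (sin (real m * x) / real m)"
proof -
  have "(LINT t:{0..x}|lborel. cos (real m * t)) = sin (real m * x) / real m - sin (real m * 0) / real m"
    unfolding set_lebesgue_integral_def using assms
    by (intro integral_FTC_atLeastAtMost)
       (auto intro!: continuous_intros derivative_eq_intros
         simp: has_real_derivative_iff_has_vector_derivative[symmetric])
  then show ?thesis unfolding prim_def set_integral_complex_of_real by simp
qed

abbreviation signs :: "(int \<times> int) set" where
  "signs \<equiv> {1, -1} \<times> {1, -1}"

lemma sin_sin_cos_eq: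
  fixes a b c :: real
  shows "sin a * sin b * cos c
     = (\<Sum>(\<tau>, \<sigma>)\<in>signs. of_int (\<tau> * \<sigma>) / 4 * cos (of_int \<tau> * a + c - of_int \<sigma> * b))"
  by (simp add: sin_add sin_diff cos_add cos_diff algebra_simps)

lemma integral_sin_sin_cos:
  fixes m l n :: nat
  shows "(LINT x:{0..pi}|lborel. sin (real m * x) * sin (real l * x) * cos (2 * real n * x))
       = pi / 4 * (\<Sum>(\<tau>, \<sigma>)\<in>signs. of_int (\<tau> * \<sigma>) * of_bool (\<tau> * m + 2 * n = \<sigma> * l))"
proof -
  define a where "a = (\<lambda>(\<tau>, \<sigma>). of_int (\<tau> * \<sigma>) / 4 :: real)"
  define j where "j = (\<lambda>(\<tau>, \<sigma>). \<tau> * int m + 2 * int n - \<sigma> * int l)"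
  have "sin (real m * x) * sin (real l * x) * cos (2 * real n * x)
     = (\<Sum>i\<in>signs. a i * cos (real_of_int (j i) * x))" for x
    unfolding sin_sin_cos_eq a_def j_def by (intro sum.cong) (auto simp: algebra_simps)
  then have "(LINT x:{0..pi}|lborel. sin (real m * x) * sin (real l * x) * cos (2 * real n * x))
      = pi * (\<Sum>i\<in>signs. a i * of_bool (j i = 0))"
    by (simp only: integral_cos_lincomb)
  also have "\<dots> = pi / 4 * (\<Sum>(\<tau>, \<sigma>)\<in>signs. of_int (\<tau> * \<sigma>) * of_bool (\<tau> * m + 2 * n = \<sigma> * l))"
    unfolding a_def j_def sum_distrib_left by (intro sum.cong) auto
  finally show ?thesis .
qed

definition cos_poly :: "(nat \<Rightarrow> complex) \<Rightarrow> nat \<Rightarrow> real \<Rightarrow> complex" where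
  "cos_poly c N x = (\<Sum>m=1..N. c m * cos_mode m x)"

(* The contribution of k = tau m, with k + 2n = sigma l, to either side of the identity for the
   pair (cos_mode m, cos_mode l). *)
definition sign_weight :: "nat \<Rightarrow> nat \<Rightarrow> nat \<Rightarrow> int \<times> int \<Rightarrow> complex" where
  "sign_weight n m l = (\<lambda>(\<tau>, \<sigma>).
     - of_int (\<tau> * \<sigma>) * of_bool (\<tau> * int m + 2 * int n = \<sigma> * int l) / (4 * of_nat m * of_nat l))"

(* When C_0 = 0, 2 C_k / k is the k-th sine coefficient of the primitive of q. *)
lemma B_term_eq_neg_product:
  "B_term n q r k = - (cos_coeff q k / of_int k) * (cos_coeff r (k + 2 * int n) / of_int (k + 2 * int n))"
  unfolding B_term_def den_eq by (simp add: times_divide_times_eq)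

lemma cos_coeff_cos_mode_div:
  assumes "m \<ge> 1"
  shows "cos_coeff (cos_mode m) k / of_int k
       = (\<Sum>\<tau>\<in>{1, -1}. of_int \<tau> * of_bool (k = \<tau> * int m)) / (2 * of_nat m)"
  using assms unfolding cos_coeff_cos[OF assms]
  by (cases "k = int m"; cases "k = - int m") (auto simp: field_simps)

lemma B_term_cos_mode:
  assumes "m \<ge> 1" "l \<ge> 1"
  shows "B_term n (cos_mode m) (cos_mode l) k
       = (\<Sum>i\<in>signs. if k = fst i * int m then sign_weight n m l i else 0)"
  unfolding B_term_eq_neg_product cos_coeff_cos_mode_div[OF assms(1)] cos_coeff_cos_mode_div[OF assms(2)]
  using assms by (cases "k = int m"; cases "k = - int m") (auto simp: sign_weight_def field_simps)

lemma Q_form_cos_mode: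
  assumes "m \<ge> 1" "l \<ge> 1"
  shows "Q_form n (cos_mode m) (cos_mode l) = (\<Sum>i\<in>signs. sign_weight n m l i)"
proof -
  let ?g = "\<lambda>x. sin (real m * x) * sin (real l * x) * cos (2 * real n * x)"
  have "(LINT x:{0..pi}|lborel. prim (cos_mode m) x * prim (cos_mode l) x * complex_of_real (cos (2 * real n * x)))
      = (LINT x:{0..pi}|lborel. complex_of_real (?g x / (real m * real l)))"
    using prim_cos[OF assms(1)] prim_cos[OF assms(2)] by (intro set_lebesgue_integral_cong) auto
  also have "\<dots> = complex_of_real ((LINT x:{0..pi}|lborel. ?g x) / (real m * real l))"
    unfolding set_integral_complex_of_real set_integral_divide_zero ..
  finally have I: "(LINT x:{0..pi}|lborel. prim (cos_mode m) x * prim (cos_mode l) x * complex_of_real (cos (2 * real n * x)))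
      = complex_of_real ((LINT x:{0..pi}|lborel. ?g x) / (real m * real l))" .
  show ?thesis
    unfolding Q_form_def I integral_sin_sin_cos using assms
    by (simp add: sign_weight_def field_simps)
qed

lemma has_sum_delta:
  assumes "w \<noteq> 0 \<Longrightarrow> j \<in> A"
  shows "((\<lambda>k. if k = j then w else 0) has_sum w) A"
proof (cases "w = 0")
  case True
  then have "(\<lambda>k. if k = j then w else 0) = (\<lambda>_. 0)" by auto
  then show ?thesis using True by simp
next
  case False
  then show ?thesis using assms by (intro has_sum_finite_neutralI[of "{j}"]) auto
qed

lemma has_sum_sum:
  fixes f :: "'i \<Rightarrow> 'a \<Rightarrow> 'b::topological_comm_monoid_add"
  assumes "finite I" "\<And>i. i \<in> I \<Longrightarrow> (f i has_sum s i) A"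
  shows "((\<lambda>x. \<Sum>i\<in>I. f i x) has_sum (\<Sum>i\<in>I. s i)) A"
  using assms by (induction I rule: finite_induct) (simp_all add: has_sum_add)

lemma B_term_cos_mode_has_sum:
  assumes "m \<ge> 1" "l \<ge> 1"
  shows "(B_term n (cos_mode m) (cos_mode l) has_sum Q_form n (cos_mode m) (cos_mode l)) (B_index n)"
proof -
  have "fst i * int m \<in> B_index n" if "i \<in> signs" "sign_weight n m l i \<noteq> 0" for i
    using that assms by (auto simp: sign_weight_def)
  then have "((\<lambda>k. \<Sum>i\<in>signs. if k = fst i * int m then sign_weight n m l i else 0)
      has_sum (\<Sum>i\<in>signs. sign_weight n m l i)) (B_index n)"
    by (intro has_sum_sum has_sum_delta) auto
  then show ?thesis
    unfolding Q_form_cos_mode[OF assms] by (subst has_sum_cong) (auto simp: B_term_cos_mode[OF assms])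
qed

lemma cos_coeff_cos_poly: "cos_coeff (cos_poly c N) k = (\<Sum>m=1..N. c m * cos_coeff (cos_mode m) k)"
proof -
  have "set_integrable lborel {0..pi} (\<lambda>x. c m * (cos_mode m x * complex_of_real (cos (real_of_int k * x))))" for m
    by (intro borel_integrable_atLeastAtMost' continuous_intros)
  then show ?thesis
    unfolding cos_coeff_def cos_poly_def sum_distrib_right
    by (simp add: set_integral_sum(2) sum_distrib_left mult.assoc mult.left_commute)
qed

lemma prim_cos_poly: "prim (cos_poly c N) x = (\<Sum>m=1..N. c m * prim (cos_mode m) x)"
proof -
  have "set_integrable lborel {0..x} (\<lambda>t. c m * cos_mode m t)" for m
    by (intro borel_integrable_atLeastAtMost' continuous_intros)
  then show ?thesis
    unfolding prim_def cos_poly_def by (simp add: set_integral_sum(2))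
qed

lemma B_term_cos_poly:
  "B_term n (cos_poly c N) (cos_poly d M) k
     = (\<Sum>m=1..N. \<Sum>l=1..M. c m * d l * B_term n (cos_mode m) (cos_mode l) k)"
  unfolding B_term_def cos_coeff_cos_poly sum_product sum_divide_distrib
  by (intro sum.cong refl) (simp add: field_simps)

lemma Q_form_cos_poly:
  "Q_form n (cos_poly c N) (cos_poly d M)
     = (\<Sum>m=1..N. \<Sum>l=1..M. c m * d l * Q_form n (cos_mode m) (cos_mode l))"
proof -
  let ?h = "\<lambda>m l x. prim (cos_mode m) x * prim (cos_mode l) x * complex_of_real (cos (2 * real n * x))"
  have int: "set_integrable lborel {0..pi} (\<lambda>x. c m * d l * ?h m l x)" for m l
    by (intro set_integrable_mult_right set_integrable_prim_prim_cos borel_integrable_atLeastAtMost'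
        continuous_intros)
  have "prim (cos_poly c N) x * prim (cos_poly d M) x * complex_of_real (cos (2 * real n * x))
      = (\<Sum>m=1..N. \<Sum>l=1..M. c m * d l * ?h m l x)" for x
    unfolding prim_cos_poly sum_product unfolding sum_distrib_right by (intro sum.cong refl) (simp add: mult_ac)
  then show ?thesis
    unfolding Q_form_def using int
    by (simp add: set_integral_sum sum_distrib_left mult.left_commute)
qed

lemma B_defect_cos_poly: "B_defect n (cos_poly c N) (cos_poly d M) = 0"
proof -
  have "((\<lambda>k. \<Sum>m=1..N. \<Sum>l=1..M. c m * d l * B_term n (cos_mode m) (cos_mode l) k)
      has_sum (\<Sum>m=1..N. \<Sum>l=1..M. c m * d l * Q_form n (cos_mode m) (cos_mode l))) (B_index n)"
    by (intro has_sum_sum finite_atLeastAtMost has_sum_cmult_right B_term_cos_mode_has_sum) auto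
  then show ?thesis
    unfolding B_defect_def B_term_cos_poly Q_form_cos_poly by (simp add: infsumI)
qed

lemma set_integrable_cos_poly: "set_integrable lborel {0..pi} (cos_poly c N)"
  unfolding cos_poly_def by (intro borel_integrable_atLeastAtMost' continuous_intros)

lemma integral_cos_poly: "(LINT x:{0..pi}|lborel. cos_poly c N x) = 0"
proof -
  have "set_integrable lborel {0..pi} (\<lambda>x. c m * cos_mode m x)" for m
    by (intro borel_integrable_atLeastAtMost' continuous_intros)
  moreover have "(LINT x:{0..pi}|lborel. cos_mode m x) = 0" if "m \<ge> 1" for m
    using integral_cos_int[of "int m"] that by (simp add: set_integral_complex_of_real)
  ultimately show ?thesis
    unfolding cos_poly_def by (simp add: set_integral_sum(2))
qed

section \<open>Density of cosine polynomials\<close>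

definition clip :: "real \<Rightarrow> complex \<Rightarrow> complex" where
  "clip M z = (M / max M (norm z)) *\<^sub>R z"

lemma continuous_on_clip: "M > 0 \<Longrightarrow> continuous_on UNIV (clip M)"
  unfolding clip_def by (intro continuous_intros) auto

lemma norm_clip_le: "M > 0 \<Longrightarrow> norm (clip M z) \<le> M"
  unfolding clip_def by (simp add: divide_simps max_def)

lemma clip_eq_self: "M > 0 \<Longrightarrow> norm z \<le> M \<Longrightarrow> clip M z = z"
  unfolding clip_def by (simp add: max_def)

lemma norm_diff_clip_le: "M > 0 \<Longrightarrow> norm (z - clip M z) \<le> norm z"
proof -
  assume M: "M > 0"
  have "z - clip M z = (1 - M / max M (norm z)) *\<^sub>R z" unfolding clip_def by (simp add: algebra_simps)
  moreover have "0 \<le> 1 - M / max M (norm z)" "1 - M / max M (norm z) \<le> 1"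
    using M by (auto simp: divide_simps max_def)
  ultimately show ?thesis by (simp add: mult_left_le_one_le)
qed

lemma clip_0 [simp]: "clip M 0 = 0"
  unfolding clip_def by simp

lemma L1_approx_by_clip:
  fixes f :: "'a \<Rightarrow> complex"
  assumes f: "integrable M f" and e: "e > 0"
  obtains c where "c > 0" "(\<integral>x. norm (f x - clip c (f x)) \<partial>M) < e"
proof -
  define s where "s i x = norm (f x - clip (real (Suc i)) (f x))" for i x
  have [measurable]: "f \<in> borel_measurable M" using f by (rule borel_measurable_integrable)
  have [measurable]: "s i \<in> borel_measurable M" for i unfolding s_def clip_def by measurable
  have "(\<lambda>i. integral\<^sup>L M (s i)) \<longlonglongrightarrow> integral\<^sup>L M (\<lambda>x. 0)"
  proof (rule integral_dominated_convergence)
    show "integrable M (\<lambda>x. norm (f x))" using f by simp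
    show "AE x in M. (\<lambda>i. s i x) \<longlonglongrightarrow> 0"
    proof (rule AE_I2)
      fix x
      obtain i0 :: nat where "norm (f x) \<le> real i0" using real_arch_simple by blast
      then have "\<forall>\<^sub>F i in sequentially. s i x = 0"
        unfolding eventually_sequentially s_def by (auto intro!: exI[of _ i0] simp: clip_eq_self)
      then show "(\<lambda>i. s i x) \<longlonglongrightarrow> 0" by (rule tendsto_eventually)
    qed
    show "AE x in M. norm (s i x) \<le> norm (f x)" for i
      unfolding s_def using norm_diff_clip_le by simp
  qed (simp_all add: s_def)
  then have "\<forall>\<^sub>F i in sequentially. integral\<^sup>L M (s i) < e"
    using e by (simp add: order_tendstoD(2))
  then obtain i where "integral\<^sup>L M (s i) < e" unfolding eventually_sequentially by blast
  then show ?thesis using that[of "real (Suc i)"] unfolding s_def by simp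
qed

lemma AE_not_in_negligible: "negligible N \<Longrightarrow> AE x in lborel. x \<notin> N"
proof -
  assume "negligible N"
  then have "AE x in lebesgue. x \<notin> N" by (simp add: negligible_iff_null_sets AE_not_in)
  then show ?thesis by (simp add: AE_completion_iff)
qed

lemma tendsto_set_integral_norm_diff_clip:
  fixes f :: "real \<Rightarrow> complex" and G :: "nat \<Rightarrow> real \<Rightarrow> complex"
  assumes [measurable]: "f \<in> borel_measurable lborel" and G: "\<And>n. continuous_on UNIV (G n)"
    and lim: "AE x in lborel. (\<lambda>n. G n x) \<longlonglongrightarrow> f x" and M: "M > 0"
  shows "(\<lambda>n. LINT x:{a..b}|lborel. norm (clip M (f x) - clip M (G n x))) \<longlonglongrightarrow> 0"
proof -
  define t where "t n x = indicator {a..b} x *\<^sub>R norm (clip M (f x) - clip M (G n x))" for n x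
  define w where "w x = indicator {a..b} x *\<^sub>R (2 * M)" for x
  have mG: "(\<lambda>x. clip M (G n x)) \<in> borel_measurable lborel" for n
    using borel_measurable_continuous_onI[OF continuous_on_compose2[OF continuous_on_clip[OF M] G]] by simp
  have mf: "(\<lambda>x. clip M (f x)) \<in> borel_measurable lborel"
    unfolding clip_def by measurable
  have "integrable lborel w"
    unfolding w_def using borel_integrable_atLeastAtMost'[of a b "\<lambda>x. 2 * M"] by (simp add: set_integrable_def)
  moreover have "t n \<in> borel_measurable lborel" for n
    unfolding t_def using mf mG by (intro borel_measurable_scaleR borel_measurable_norm borel_measurable_diff) auto
  moreover have "AE x in lborel. (\<lambda>n. t n x) \<longlonglongrightarrow> 0"
    using lim
  proof eventually_elim
    case (elim x)
    have "(\<lambda>n. clip M (G n x)) \<longlonglongrightarrow> clip M (f x)"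
      by (rule continuous_on_tendsto_compose[OF continuous_on_clip[OF M] elim]) auto
    then have "(\<lambda>n. clip M (f x) - clip M (G n x)) \<longlonglongrightarrow> 0"
      using tendsto_diff[OF tendsto_const[of "clip M (f x)"]] by fastforce
    then have "(\<lambda>n. norm (clip M (f x) - clip M (G n x))) \<longlonglongrightarrow> 0"
      by (rule tendsto_norm_zero)
    then show ?case
      using tendsto_scaleR[OF tendsto_const[of "indicator {a..b} x"]] unfolding t_def by fastforce
  qed
  moreover have "AE x in lborel. norm (t n x) \<le> w x" for n
  proof (rule AE_I2)
    fix x
    have "norm (clip M (f x) - clip M (G n x)) \<le> 2 * M"
      using norm_triangle_ineq4[of "clip M (f x)" "clip M (G n x)"]
        norm_clip_le[OF M, of "f x"] norm_clip_le[OF M, of "G n x"] by linarith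
    then show "norm (t n x) \<le> w x"
      unfolding t_def w_def by (auto simp: indicator_def)
  qed
  ultimately have "(\<lambda>n. integral\<^sup>L lborel (t n)) \<longlonglongrightarrow> integral\<^sup>L lborel (\<lambda>x. 0)"
    using Bochner_Integration.integral_dominated_convergence[of "\<lambda>x. 0::real" lborel t w] by simp
  then show ?thesis unfolding t_def set_lebesgue_integral_def by simp
qed

lemma L1_approx_clip_by_continuous:
  fixes f :: "real \<Rightarrow> complex"
  assumes [measurable]: "f \<in> borel_measurable lborel" and M: "M > 0" and e: "e > 0"
  obtains g where "continuous_on UNIV g" "(LINT x:{a..b}|lborel. norm (clip M (f x) - g x)) < e"
proof -
  have "f \<in> borel_measurable lebesgue" by (rule measurable_completion) measurable
  then have "f measurable_on UNIV" by (rule lebesgue_measurable_imp_measurable_on) simp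
  then obtain N G where N: "negligible N" and G: "\<And>n. continuous_on UNIV (G n)"
      and lim: "\<And>x. x \<notin> N \<Longrightarrow> (\<lambda>n. G n x) \<longlonglongrightarrow> f x"
    unfolding measurable_on_def by auto
  have "AE x in lborel. (\<lambda>n. G n x) \<longlonglongrightarrow> f x"
    using AE_not_in_negligible[OF N] by eventually_elim (rule lim)
  then have "(\<lambda>n. LINT x:{a..b}|lborel. norm (clip M (f x) - clip M (G n x))) \<longlonglongrightarrow> 0"
    using tendsto_set_integral_norm_diff_clip[where G = G, OF assms(1) G _ M] by blast
  then have "\<forall>\<^sub>F n in sequentially. (LINT x:{a..b}|lborel. norm (clip M (f x) - clip M (G n x))) < e"
    using e by (rule order_tendstoD(2))
  then obtain n where "(LINT x:{a..b}|lborel. norm (clip M (f x) - clip M (G n x))) < e"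
    unfolding eventually_sequentially by blast
  moreover have "continuous_on UNIV (\<lambda>x. clip M (G n x))"
    by (rule continuous_on_compose2[OF continuous_on_clip[OF M] G]) auto
  ultimately show ?thesis using that by blast
qed

lemma L1_approx_by_continuous:
  fixes f :: "real \<Rightarrow> complex"
  assumes f: "set_integrable lborel {a..b} f" and e: "e > 0"
  obtains g where "continuous_on UNIV g" "(LINT x:{a..b}|lborel. norm (f x - g x)) < e"
proof -
  define F where "F x = indicator {a..b} x *\<^sub>R f x" for x
  have F: "integrable lborel F" using f unfolding F_def set_integrable_def .
  have [measurable]: "F \<in> borel_measurable lborel" using F by (rule borel_measurable_integrable)
  obtain c where c: "c > 0" and Fc: "(\<integral>x. norm (F x - clip c (F x)) \<partial>lborel) < e / 2"
    using L1_approx_by_clip[OF F, of "e / 2"] e by auto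
  obtain g where g: "continuous_on UNIV g"
    and cg: "(LINT x:{a..b}|lborel. norm (clip c (F x) - g x)) < e / 2"
    using L1_approx_clip_by_continuous[of F c "e / 2" a b] c e by auto
  have [measurable]: "(\<lambda>x. clip c (F x)) \<in> borel_measurable lborel" unfolding clip_def by measurable
  have clip_int: "set_integrable lborel {a..b} (\<lambda>x. clip c (F x))"
    by (rule set_integrable_bound[OF borel_integrable_atLeastAtMost'[of a b "\<lambda>x. complex_of_real c"]])
       (use norm_clip_le[OF c] c in \<open>auto simp: set_borel_measurable_def\<close>)
  have g_int: "set_integrable lborel {a..b} g"
    by (rule borel_integrable_atLeastAtMost') (rule continuous_on_subset[OF g], simp)
  have "(\<lambda>x. indicator {a..b} x *\<^sub>R F x) = (\<lambda>x. indicator {a..b} x *\<^sub>R f x)"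
    by (auto simp: F_def indicator_def)
  then have F_int: "set_integrable lborel {a..b} F" using f unfolding set_integrable_def by simp
  have int1: "set_integrable lborel {a..b} (\<lambda>x. norm (F x - clip c (F x)))"
    by (intro set_integrable_norm set_integral_diff(1) F_int clip_int)
  have int2: "set_integrable lborel {a..b} (\<lambda>x. norm (clip c (F x) - g x))"
    by (intro set_integrable_norm set_integral_diff(1) clip_int g_int)
  have "(LINT x:{a..b}|lborel. norm (f x - g x))
      \<le> (LINT x:{a..b}|lborel. norm (F x - clip c (F x)) + norm (clip c (F x) - g x))"
  proof (rule set_integral_mono)
    show "set_integrable lborel {a..b} (\<lambda>x. norm (f x - g x))"
      by (intro set_integrable_norm set_integral_diff(1) f g_int)
    show "set_integrable lborel {a..b} (\<lambda>x. norm (F x - clip c (F x)) + norm (clip c (F x) - g x))"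
      by (intro set_integral_add(1) int1 int2)
    show "norm (f x - g x) \<le> norm (F x - clip c (F x)) + norm (clip c (F x) - g x)" if "x \<in> {a..b}" for x
      using that norm_triangle_ineq[of "F x - clip c (F x)" "clip c (F x) - g x"] by (simp add: F_def)
  qed
  also have "\<dots> = (LINT x:{a..b}|lborel. norm (F x - clip c (F x))) + (LINT x:{a..b}|lborel. norm (clip c (F x) - g x))"
    by (intro set_integral_add(2) int1 int2)
  also have "(LINT x:{a..b}|lborel. norm (F x - clip c (F x))) = (\<integral>x. norm (F x - clip c (F x)) \<partial>lborel)"
    unfolding set_lebesgue_integral_def
    by (intro Bochner_Integration.integral_cong) (auto simp: F_def indicator_def)
  finally have "(LINT x:{a..b}|lborel. norm (f x - g x)) < e" using Fc cg by linarith
  then show ?thesis using that g by blast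
qed

lemma cos_poly_truncate:
  "N \<le> K \<Longrightarrow> cos_poly (\<lambda>m. if m \<le> N then c m else 0) K x = cos_poly c N x"
  unfolding cos_poly_def by (intro sum.mono_neutral_cong_right) auto

lemma cos_poly_add:
  "cos_poly c N x + cos_poly d M x
     = cos_poly (\<lambda>m. (if m \<le> N then c m else 0) + (if m \<le> M then d m else 0)) (max N M) x"
proof -
  have "cos_poly (\<lambda>m. (if m \<le> N then c m else 0) + (if m \<le> M then d m else 0)) (max N M) x
      = cos_poly (\<lambda>m. if m \<le> N then c m else 0) (max N M) x + cos_poly (\<lambda>m. if m \<le> M then d m else 0) (max N M) x"
    unfolding cos_poly_def by (simp add: distrib_right sum.distrib)
  then show ?thesis by (simp add: cos_poly_truncate)
qed

lemma cos_poly_cmult: "a * cos_poly c N x = cos_poly (\<lambda>m. a * c m) N x"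
  unfolding cos_poly_def by (simp add: sum_distrib_left mult.assoc)

inductive real_cos_poly :: "(real \<Rightarrow> real) \<Rightarrow> bool" where
  cos: "real_cos_poly (\<lambda>x. a * cos (real m * x))"
| add: "real_cos_poly f \<Longrightarrow> real_cos_poly g \<Longrightarrow> real_cos_poly (\<lambda>x. f x + g x)"

lemma real_cos_poly_const: "real_cos_poly (\<lambda>x. a)"
  using real_cos_poly.cos[of a 0] by simp

lemma real_cos_poly_cmult: "real_cos_poly f \<Longrightarrow> real_cos_poly (\<lambda>x. a * f x)"
proof (induction rule: real_cos_poly.induct)
  case (cos b m)
  then show ?case using real_cos_poly.cos[of "a * b" m] by (simp add: mult.assoc)
next
  case (add f g)
  then show ?case using real_cos_poly.add[OF add.IH] by (simp add: distrib_left)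
qed

lemma real_cos_poly_mult_cos: "real_cos_poly f \<Longrightarrow> real_cos_poly (\<lambda>x. cos (real m * x) * f x)"
proof (induction rule: real_cos_poly.induct)
  case (cos a j)
  have prod: "cos (real m * x) * (a * cos (real j * x))
      = a / 2 * cos (real m * x - real j * x) + a / 2 * cos (real (m + j) * x)" for x
  proof -
    have "cos (real m * x) * (a * cos (real j * x))
        = a * ((cos (real m * x - real j * x) + cos (real m * x + real j * x)) / 2)"
      by (subst mult.left_commute, subst cos_times_cos, rule refl)
    moreover have "real m * x + real j * x = real (m + j) * x" by (simp add: distrib_right)
    ultimately show ?thesis by (simp add: add_divide_distrib distrib_left)
  qed
  have diff: "cos (real m * x - real j * x) = cos (real (if j \<le> m then m - j else j - m) * x)" for x
  proof (cases "j \<le> m")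
    case False
    then have "real m * x - real j * x = - (real (j - m) * x)" by (simp add: of_nat_diff algebra_simps)
    then show ?thesis using False by simp
  qed (simp add: of_nat_diff left_diff_distrib)
  show ?case unfolding prod diff by (intro real_cos_poly.add real_cos_poly.cos)
next
  case (add f g)
  then show ?case using real_cos_poly.add[OF add.IH] by (simp add: distrib_left)
qed

lemma real_cos_poly_mult: "real_cos_poly f \<Longrightarrow> real_cos_poly g \<Longrightarrow> real_cos_poly (\<lambda>x. f x * g x)"
proof (induction rule: real_cos_poly.induct)
  case (cos a m)
  then show ?case
    using real_cos_poly_cmult[OF real_cos_poly_mult_cos[OF cos.prems], of a] by (simp add: mult.assoc)
next
  case (add f1 f2)
  then show ?case using real_cos_poly.add[OF add.IH] by (simp add: distrib_right)
qed

lemma real_cos_poly_uniform_approx: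
  assumes "continuous_on {0..pi} f" "e > 0"
  obtains h where "real_cos_poly h" "\<And>x. x \<in> {0..pi} \<Longrightarrow> \<bar>f x - h x\<bar> < e"
proof -
  have "function_ring_on (Collect real_cos_poly) {0..pi}"
  proof
    show "compact {0..pi}" by simp
    show "continuous_on {0..pi} h" if "h \<in> Collect real_cos_poly" for h
      using that by (induction rule: real_cos_poly.induct[OF that[simplified]]) (auto intro!: continuous_intros)
    show "(\<lambda>x. h x + k x) \<in> Collect real_cos_poly" "(\<lambda>x. h x * k x) \<in> Collect real_cos_poly"
      if "h \<in> Collect real_cos_poly" "k \<in> Collect real_cos_poly" for h k
      using that real_cos_poly.add real_cos_poly_mult by auto
    show "(\<lambda>_. c) \<in> Collect real_cos_poly" for c using real_cos_poly_const by auto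
    show "\<exists>h\<in>Collect real_cos_poly. h x \<noteq> h y" if "x \<in> {0..pi}" "y \<in> {0..pi}" "x \<noteq> y" for x y
    proof
      show "(\<lambda>x. 1 * cos (real 1 * x)) \<in> Collect real_cos_poly" using real_cos_poly.cos by blast
      show "1 * cos (real 1 * x) \<noteq> 1 * cos (real 1 * y)" using that cos_inj_pi by auto
    qed
  qed
  then obtain F where F: "F \<in> UNIV \<rightarrow> Collect real_cos_poly" and lim: "uniform_limit {0..pi} F f sequentially"
    using function_ring_on.Stone_Weierstrass[OF _ assms(1)] by blast
  obtain n where "\<forall>x\<in>{0..pi}. dist (F n x) (f x) < e"
    using uniform_limitD[OF lim assms(2)] unfolding eventually_sequentially by blast
  then show ?thesis
    using that[of "F n"] F by (auto simp: dist_real_def abs_minus_commute)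
qed

lemma real_cos_poly_eq_cos_poly:
  assumes "real_cos_poly f"
  obtains c0 c N where "\<And>x. complex_of_real (f x) = c0 + cos_poly c N x"
  using assms
proof (induction arbitrary: thesis rule: real_cos_poly.induct)
  case (cos a m)
  show ?case
  proof (cases "m = 0")
    case True
    then show ?thesis using cos.prems[of "complex_of_real a" "\<lambda>_. 0" 0] by (simp add: cos_poly_def)
  next
    case False
    have "cos_poly (\<lambda>j. if j = m then complex_of_real a else 0) m x = complex_of_real (a * cos (real m * x))" for x
    proof -
      have "cos_poly (\<lambda>j. if j = m then complex_of_real a else 0) m x
          = (\<Sum>j=1..m. if j = m then complex_of_real (a * cos (real j * x)) else 0)"
        unfolding cos_poly_def by (intro sum.cong) auto
      also have "\<dots> = complex_of_real (a * cos (real m * x))" using False by simp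
      finally show ?thesis .
    qed
    then show ?thesis using cos.prems[of 0 "\<lambda>j. if j = m then complex_of_real a else 0" m] by simp
  qed
next
  case (add f g)
  obtain c0 c N where f: "\<And>x. complex_of_real (f x) = c0 + cos_poly c N x" using add.IH(1) by blast
  obtain d0 d M where g: "\<And>x. complex_of_real (g x) = d0 + cos_poly d M x" using add.IH(2) by blast
  show ?case
    using add.prems[of "c0 + d0" "\<lambda>m. (if m \<le> N then c m else 0) + (if m \<le> M then d m else 0)" "max N M"]
    by (simp add: f g flip: cos_poly_add)
qed

lemma cos_poly_uniform_approx:
  fixes g :: "real \<Rightarrow> complex"
  assumes g: "continuous_on {0..pi} g" and e: "e > 0"
  obtains c0 c N where "\<And>x. x \<in> {0..pi} \<Longrightarrow> norm (g x - (c0 + cos_poly c N x)) < e"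
proof -
  have Re: "continuous_on {0..pi} (\<lambda>x. Re (g x))" and Im: "continuous_on {0..pi} (\<lambda>x. Im (g x))"
    using g by (auto intro!: continuous_intros)
  have half: "e / 2 > 0" using e by simp
  obtain h1 where h1: "real_cos_poly h1" "\<And>x. x \<in> {0..pi} \<Longrightarrow> \<bar>Re (g x) - h1 x\<bar> < e / 2"
    using real_cos_poly_uniform_approx[OF Re half] by blast
  obtain h2 where h2: "real_cos_poly h2" "\<And>x. x \<in> {0..pi} \<Longrightarrow> \<bar>Im (g x) - h2 x\<bar> < e / 2"
    using real_cos_poly_uniform_approx[OF Im half] by blast
  obtain c0 c N where c: "\<And>x. complex_of_real (h1 x) = c0 + cos_poly c N x"
    using real_cos_poly_eq_cos_poly[OF h1(1)] by blast
  obtain d0 d M where d: "\<And>x. complex_of_real (h2 x) = d0 + cos_poly d M x"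
    using real_cos_poly_eq_cos_poly[OF h2(1)] by blast
  define b where "b m = (if m \<le> N then c m else 0) + (if m \<le> M then \<i> * d m else 0)" for m
  have "Complex (h1 x) (h2 x) = (c0 + \<i> * d0) + (cos_poly c N x + cos_poly (\<lambda>m. \<i> * d m) M x)" for x
    using c[of x] d[of x] by (simp add: complex_eq_iff algebra_simps flip: cos_poly_cmult)
  then have repr: "Complex (h1 x) (h2 x) = (c0 + \<i> * d0) + cos_poly b (max N M) x" for x
    unfolding cos_poly_add b_def .
  show ?thesis
  proof (rule that)
    fix x assume x: "x \<in> {0..pi}"
    have "norm (g x - Complex (h1 x) (h2 x)) \<le> \<bar>Re (g x) - h1 x\<bar> + \<bar>Im (g x) - h2 x\<bar>"
      using cmod_le[of "g x - Complex (h1 x) (h2 x)"] by simp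
    also have "\<dots> < e" using h1(2)[OF x] h2(2)[OF x] by linarith
    finally show "norm (g x - ((c0 + \<i> * d0) + cos_poly b (max N M) x)) < e"
      unfolding repr[symmetric] .
  qed
qed

lemma norm_const_le_L1_norm:
  assumes q: "set_integrable lborel {0..pi} q" and mean: "(LINT x:{0..pi}|lborel. q x) = 0"
  shows "pi * norm c0 \<le> L1_norm (\<lambda>x. q x - (c0 + cos_poly c N x))"
proof -
  let ?p = "\<lambda>x. c0 + cos_poly c N x"
  have c0: "set_integrable lborel {0..pi} (\<lambda>x. c0)" by (rule borel_integrable_atLeastAtMost') simp
  have p: "set_integrable lborel {0..pi} ?p" by (rule set_integral_add(1)[OF c0 set_integrable_cos_poly])
  have "(LINT x:{0..pi}|lborel. ?p x - q x)
      = (LINT x:{0..pi}|lborel. c0) + (LINT x:{0..pi}|lborel. cos_poly c N x)"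
    using set_integral_diff(2)[OF p q] set_integral_add(2)[OF c0 set_integrable_cos_poly] mean by simp
  also have "\<dots> = pi *\<^sub>R c0" unfolding integral_cos_poly by (subst set_integral_const) auto
  finally have "pi * norm c0 = norm (LINT x:{0..pi}|lborel. ?p x - q x)" by simp
  also have "\<dots> \<le> L1_norm (\<lambda>x. q x - ?p x)"
    unfolding L1_norm_def using set_integral_norm_bound[of lborel "{0..pi}" "\<lambda>x. ?p x - q x"] p q
    by (simp add: norm_minus_commute)
  finally show ?thesis .
qed

lemma cos_poly_L1_dense:
  assumes q: "set_integrable lborel {0..pi} q" and mean: "(LINT x:{0..pi}|lborel. q x) = 0"
    and e: "e > 0"
  obtains c N where "L1_norm (\<lambda>x. q x - cos_poly c N x) < e"
proof -
  obtain g where g: "continuous_on UNIV g" and qg: "L1_norm (\<lambda>x. q x - g x) < e / 4"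
    using L1_approx_by_continuous[OF q, of "e / 4"] e unfolding L1_norm_def by auto
  have g': "continuous_on {0..pi} g" using g by (rule continuous_on_subset) simp
  obtain c0 c N where gp: "\<And>x. x \<in> {0..pi} \<Longrightarrow> norm (g x - (c0 + cos_poly c N x)) < e / (4 * pi)"
    using cos_poly_uniform_approx[OF g', of "e / (4 * pi)"] e by auto
  define p where "p x = c0 + cos_poly c N x" for x
  have g_int: "set_integrable lborel {0..pi} g" by (rule borel_integrable_atLeastAtMost'[OF g'])
  have p_int: "set_integrable lborel {0..pi} p"
    unfolding p_def by (intro set_integral_add(1) set_integrable_cos_poly borel_integrable_atLeastAtMost') simp
  have gp_int: "set_integrable lborel {0..pi} (\<lambda>x. g x - p x)" using g_int p_int by blast
  have "L1_norm (\<lambda>x. g x - p x) \<le> pi * (e / (4 * pi))"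
    by (rule L1_norm_le_uniform[OF gp_int]) (unfold p_def, rule less_imp_le, erule gp)
  then have "L1_norm (\<lambda>x. q x - p x) < e / 2"
    using L1_norm_triangle[OF q g_int p_int] qg by simp
  moreover have "pi * norm c0 \<le> L1_norm (\<lambda>x. q x - p x)"
    unfolding p_def by (rule norm_const_le_L1_norm[OF q mean])
  moreover have "L1_norm (\<lambda>x. p x - cos_poly c N x) = pi * norm c0"
    unfolding p_def by (simp add: L1_norm_const)
  ultimately have "L1_norm (\<lambda>x. q x - cos_poly c N x) < e"
    using L1_norm_triangle[OF q p_int set_integrable_cos_poly[of c N]] by linarith
  then show ?thesis by (rule that)
qed

lemma norm_B_defect_le_approx:
  assumes q: "set_integrable lborel {0..pi} q" and mean: "(LINT x:{0..pi}|lborel. q x) = 0"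
  obtains C where "C \<ge> 0" "\<And>\<delta>. \<delta> > 0 \<Longrightarrow> norm (B_defect n q q) \<le> C * \<delta> * (2 * L1_norm q + \<delta>)"
proof -
  obtain C where C: "C \<ge> 0"
    and bound: "\<And>q r. set_integrable lborel {0..pi} q \<Longrightarrow> set_integrable lborel {0..pi} r
       \<Longrightarrow> norm (B_defect n q r) \<le> C * L1_norm q * L1_norm r"
    using B_defect_bounded by blast
  have "norm (B_defect n q q) \<le> C * \<delta> * (2 * L1_norm q + \<delta>)" if "\<delta> > 0" for \<delta>
  proof -
    obtain c N where d: "L1_norm (\<lambda>x. q x - cos_poly c N x) < \<delta>"
      using cos_poly_L1_dense[OF q mean \<open>\<delta> > 0\<close>] by blast
    let ?p = "cos_poly c N" and ?d = "\<lambda>x. q x - cos_poly c N x"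
    have p: "set_integrable lborel {0..pi} ?p" by (rule set_integrable_cos_poly)
    have dq: "set_integrable lborel {0..pi} ?d" using q p by blast
    have "B_defect n q q = B_defect n ?d q + B_defect n ?p ?d"
      using B_defect_diff_left[OF q p q, of n] B_defect_diff_right[OF q p p, of n] B_defect_cos_poly[of n c N c N]
      by simp
    then have "norm (B_defect n q q) \<le> norm (B_defect n ?d q) + norm (B_defect n ?p ?d)"
      by (simp add: norm_triangle_ineq)
    also have "\<dots> \<le> C * L1_norm ?d * L1_norm q + C * L1_norm ?p * L1_norm ?d"
      by (intro add_mono bound dq q p)
    also have "\<dots> \<le> C * \<delta> * L1_norm q + C * (L1_norm q + \<delta>) * \<delta>"
      using L1_norm_le_add_diff[OF q p] d C L1_norm_nonneg[of q] L1_norm_nonneg[of ?d] L1_norm_nonneg[of ?p]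
      by (intro add_mono mult_mono mult_left_mono) auto
    also have "\<dots> = C * \<delta> * (2 * L1_norm q + \<delta>)" by (simp add: algebra_simps)
    finally show ?thesis .
  qed
  then show ?thesis using that C by blast
qed

lemma B_defect_eq_0:
  assumes q: "set_integrable lborel {0..pi} q" and c0: "cos_coeff q 0 = 0"
  shows "B_defect n q q = 0"
proof -
  have "(LINT x:{0..pi}|lborel. q x) = 0" using c0 unfolding cos_coeff_def by simp
  then obtain C where le: "\<And>\<delta>. \<delta> > 0 \<Longrightarrow> norm (B_defect n q q) \<le> C * \<delta> * (2 * L1_norm q + \<delta>)"
    using norm_B_defect_le_approx[OF q] by blast
  have "((\<lambda>\<delta>. C * \<delta> * (2 * L1_norm q + \<delta>)) \<longlongrightarrow> C * 0 * (2 * L1_norm q + 0)) (at_right 0)"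
    by (intro tendsto_intros)
  moreover have "\<forall>\<^sub>F \<delta> in at_right 0. norm (B_defect n q q) \<le> C * \<delta> * (2 * L1_norm q + \<delta>)"
    using eventually_at_right_less[of "0::real"] by eventually_elim (rule le)
  ultimately have "norm (B_defect n q q) \<le> C * 0 * (2 * L1_norm q + 0)"
    using trivial_limit_at_right_real by (rule tendsto_lowerbound)
  then show ?thesis by simp
qed

theorem lemma2:
  fixes q :: "real \<Rightarrow> complex" and n :: nat
  assumes "set_integrable lborel {0..pi} q"
    and "cos_coeff q 0 = 0"
    and "n > 0"
  shows "((\<lambda>k::int. cos_coeff q k * cos_coeff q (k + 2 * int n)
            / complex_of_real (real n ^ 2 - (real n + real_of_int k) ^ 2))
          has_sum
          (- (1 / pi) * (LINT x:{0..pi}|lborel. (prim q x)^2 * complex_of_real (cos (2 * real n * x)))))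
         (UNIV - {0, - 2 * int n})"
proof -
  have "(B_term n q q has_sum infsum (B_term n q q) (B_index n)) (B_index n)"
    using B_term_summable[OF assms(1) assms(1)] by simp
  also have "infsum (B_term n q q) (B_index n) = Q_form n q q"
    using B_defect_eq_0[OF assms(1,2)] unfolding B_defect_def by simp
  finally show ?thesis
    unfolding B_term_def[abs_def] den_def Q_form_def power2_eq_square .
qed

end
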